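(* For every $T$, every sequence of forecasts $\mathbf p\in[0,1]^T$ and every sequence of outcomes $\mathbf x\in\{0,1\}^T$, $$\tfrac12\,\mathrm{MaxAgentReg}(\mathbf p,\mathbf x)\le \mathrm{VCal}(\mathbf p,\mathbf x)\le \mathrm{MaxAgentReg}(\mathbf p,\mathbf x).$$
   Context: A binary scoring rule is $\ell:[0,1]\times\{0,1\}\to\mathbb R$; with $\ell(p;q)=(1-q)\ell(p,0)+q\ell(p,1)$ it is proper if $\ell(p;p)\le\ell(p';p)$ for all $p,p'$. Let $\mathcal L$ be the set of proper scoring rules with values in $[-1,1]$. For $\beta=\frac1T\sum_tx_t$, $\mathrm{Reg}_\ell(\mathbf p,\mathbf x)=\sum_t\ell(p_t,x_t)-\sum_t\ell(\beta,x_t)$, and the U-calibration error is $\mathrm{MaxAgentReg}(\mathbf p,\mathbf x)=\sup_{\ell\in\mathcal L}\mathrm{Reg}_\ell(\mathbf p,\mathbf x)$. For $v\in[0,1]$ the V-shaped scoring rule $\ell_v$ is defined by $\ell_v(p,0)=v\,\mathrm{sgn}(p-v)$ and $\ell_v(p,1)=(1-v)\,\mathrm{sgn}(v-p)$, where $\mathrm{sgn}(0)=0$; its univariate form is $\ell_v(p;p)=-|p-v|$. The V-calibration error is $\mathrm{VCal}(\mathbf p,\mathbf x)=\sup_{v\in[0,1]}\mathrm{Reg}_{\ell_v}(\mathbf p,\mathbf x)$. *)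

theory Defs
  imports "HOL-Analysis.Analysis"
begin

(* A binary scoring rule: l p y for forecast p and outcome y (True = 1, False = 0). *)
type_synonym scoring_rule = "real \<Rightarrow> bool \<Rightarrow> real"

definition exp_score :: "scoring_rule \<Rightarrow> real \<Rightarrow> real \<Rightarrow> real" where
  "exp_score l p q = (1 - q) * l p False + q * l p True"

definition proper :: "scoring_rule \<Rightarrow> bool" where
  "proper l \<longleftrightarrow> (\<forall>p\<in>{0..1}. \<forall>p'\<in>{0..1}. exp_score l p p \<le> exp_score l p' p)"

definition bounded_proper_rules :: "scoring_rule set" where
  "bounded_proper_rules = {l. proper l \<and> (\<forall>p\<in>{0..1}. \<forall>y. l p y \<in> {-1..1})}"

definition of_outcome :: "bool \<Rightarrow> real" where
  "of_outcome y = (if y then 1 else 0)"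

definition beta :: "nat \<Rightarrow> (nat \<Rightarrow> bool) \<Rightarrow> real" where
  "beta T x = (\<Sum>t<T. of_outcome (x t)) / real T"

definition Reg :: "scoring_rule \<Rightarrow> nat \<Rightarrow> (nat \<Rightarrow> real) \<Rightarrow> (nat \<Rightarrow> bool) \<Rightarrow> real" where
  "Reg l T p x = (\<Sum>t<T. l (p t) (x t)) - (\<Sum>t<T. l (beta T x) (x t))"

definition MaxAgentReg :: "nat \<Rightarrow> (nat \<Rightarrow> real) \<Rightarrow> (nat \<Rightarrow> bool) \<Rightarrow> real" where
  "MaxAgentReg T p x = (SUP l\<in>bounded_proper_rules. Reg l T p x)"

definition vshaped :: "real \<Rightarrow> scoring_rule" where
  "vshaped v p y = (if y then (1 - v) * sgn (v - p) else v * sgn (p - v))"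

definition VCal :: "nat \<Rightarrow> (nat \<Rightarrow> real) \<Rightarrow> (nat \<Rightarrow> bool) \<Rightarrow> real" where
  "VCal T p x = (SUP v\<in>{0..1}. Reg (vshaped v) T p x)"

end

(*
  Every V-shaped rule is a bounded proper rule, so VCal \<le> MaxAgentReg.

  Conversely, the regret of a rule only depends on its values at the finitely many points
  S = {p_t} \<union> {beta}. For a proper rule l write slope q = l(q,1) - l(q,0). Between two
  consecutive points a < b of S properness forces l(b,y) - l(a,y) = D (v - y) with
  D = slope a - slope b \<ge> 0 and v \<in> [a,b]. Summing these increments, l agrees on S with an
  outcome-only term plus a nonnegative combination, of total weight
  (slope (min S) - slope (max S)) / 2 \<le> 2, of step rules, equal to y - v for q \<le> a and to
  v - y for q > a: V-shaped rules whose kink is moved into a gap (a,b) of S. The outcome-only term has no regret, and the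
  regret of a step rule is affine in v and equals the regret of l_w for every w \<in> (a,b),
  hence it is at most VCal by continuity. Since VCal \<ge> 0, this gives MaxAgentReg \<le> 2 VCal.
*)
theory Submission
  imports Defs
begin

lemma vshaped_eq_sgn: "vshaped v q y = sgn (v - q) * (of_outcome y - v)"
  by (cases "v < q"; cases "v = q"; auto simp: vshaped_def of_outcome_def algebra_simps)

lemma vshaped_in_bounded_proper_rules:
  assumes "v \<in> {0..1}"
  shows "vshaped v \<in> bounded_proper_rules"
proof -
  have exp_score_vshaped: "exp_score (vshaped v) a q = sgn (v - a) * (q - v)" for a q
    by (simp add: exp_score_def vshaped_eq_sgn of_outcome_def algebra_simps)
  have "proper (vshaped v)"
    unfolding proper_def exp_score_vshaped by (auto simp: sgn_if)
  moreover have "\<forall>q\<in>{0..1}. \<forall>y. vshaped v q y \<in> {-1..1}"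
    using assms by (auto simp: vshaped_def sgn_if)
  ultimately show ?thesis
    unfolding bounded_proper_rules_def by simp
qed

lemma beta_in_unit_interval: "beta T x \<in> {0..1}"
proof -
  have "(\<Sum>t<T. of_outcome (x t)) \<le> (\<Sum>t<T. 1)"
    by (intro sum_mono) (simp add: of_outcome_def)
  moreover have "(\<Sum>t<T. of_outcome (x t)) \<ge> 0"
    by (intro sum_nonneg) (simp add: of_outcome_def)
  ultimately show ?thesis
    unfolding beta_def by (cases "T = 0") (auto simp: divide_le_eq)
qed

lemma beta_pos:
  assumes "t < T" "x t"
  shows "beta T x > 0"
proof -
  have "(\<Sum>t<T. of_outcome (x t)) \<ge> of_outcome (x t)"
    by (rule member_le_sum) (use assms in \<open>auto simp: of_outcome_def\<close>)
  then show ?thesis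
    using assms unfolding beta_def by (simp add: of_outcome_def)
qed

lemma Reg_cong:
  assumes "\<forall>t<T. \<forall>y. l (p t) y = l' (p t) y" "\<forall>y. l (beta T x) y = l' (beta T x) y"
  shows "Reg l T p x = Reg l' T p x"
  unfolding Reg_def using assms by simp

lemma Reg_add_outcome_term: "Reg (\<lambda>q y. c y + l q y) T p x = Reg l T p x"
  by (simp add: Reg_def sum.distrib)

lemma Reg_weighted_sum:
  "Reg (\<lambda>q y. \<Sum>j\<in>J. W j * l j q y) T p x = (\<Sum>j\<in>J. W j * Reg (l j) T p x)"
  by (simp add: Reg_def sum_distrib_left sum_subtractf right_diff_distrib sum.swap[of _ J])

lemma Reg_le_of_bounded:
  assumes "\<forall>t<T. p t \<in> {0..1}" "\<forall>q\<in>{0..1}. \<forall>y. l q y \<in> {-1..1}"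
  shows "Reg l T p x \<le> 2 * T"
proof -
  have "(\<Sum>t<T. l (p t) (x t)) \<le> (\<Sum>t<T. 1)"
    by (intro sum_mono) (use assms in auto)
  moreover have "(\<Sum>t<T. -1) \<le> (\<Sum>t<T. l (beta T x) (x t))"
    by (intro sum_mono) (use assms beta_in_unit_interval in auto)
  ultimately show ?thesis
    unfolding Reg_def by simp
qed

lemma bdd_above_Reg_bounded_proper_rules:
  assumes "\<forall>t<T. p t \<in> {0..1}"
  shows "bdd_above ((\<lambda>l. Reg l T p x) ` bounded_proper_rules)"
proof (rule bdd_aboveI2)
  fix l assume "l \<in> bounded_proper_rules"
  then show "Reg l T p x \<le> 2 * T"
    using assms Reg_le_of_bounded unfolding bounded_proper_rules_def by blast
qed

lemma Reg_vshaped_le_VCal: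
  assumes "\<forall>t<T. p t \<in> {0..1}" "v \<in> {0..1}"
  shows "Reg (vshaped v) T p x \<le> VCal T p x"
proof -
  have "bdd_above ((\<lambda>v. Reg (vshaped v) T p x) ` {0..1})"
    by (rule bdd_above_mono[OF bdd_above_Reg_bounded_proper_rules[OF assms(1)]])
      (use vshaped_in_bounded_proper_rules in auto)
  then show ?thesis
    unfolding VCal_def by (rule cSUP_upper[OF assms(2)])
qed

lemma VCal_le_MaxAgentReg:
  assumes "\<forall>t<T. p t \<in> {0..1}"
  shows "VCal T p x \<le> MaxAgentReg T p x"
  unfolding VCal_def MaxAgentReg_def
proof (rule cSUP_least)
  fix v :: real assume "v \<in> {0..1}"
  then show "Reg (vshaped v) T p x \<le> (SUP l\<in>bounded_proper_rules. Reg l T p x)"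
    by (intro cSUP_upper vshaped_in_bounded_proper_rules bdd_above_Reg_bounded_proper_rules[OF assms])
qed simp

lemma VCal_nonneg:
  assumes "\<forall>t<T. p t \<in> {0..1}"
  shows "VCal T p x \<ge> 0"
proof -
  have "vshaped 0 (beta T x) (x t) \<le> vshaped 0 (p t) (x t)" if "t \<in> {..<T}" for t
    using beta_pos[of t T x] assms that by (cases "x t") (auto simp: vshaped_def sgn_if)
  then have "(\<Sum>t<T. vshaped 0 (beta T x) (x t)) \<le> (\<Sum>t<T. vshaped 0 (p t) (x t))"
    by (rule sum_mono)
  then have "0 \<le> Reg (vshaped 0) T p x"
    unfolding Reg_def by simp
  also have "\<dots> \<le> VCal T p x"
    using Reg_vshaped_le_VCal[OF assms] by simp
  finally show ?thesis .
qed

definition step_rule :: "real \<Rightarrow> real \<Rightarrow> scoring_rule" where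
  "step_rule a v q y = (if q \<le> a then 1 else -1) * (of_outcome y - v)"

lemma step_rule_below: "q \<le> a \<Longrightarrow> step_rule a v q y = of_outcome y - v"
  and step_rule_above: "a < q \<Longrightarrow> step_rule a v q y = v - of_outcome y"
  by (simp_all add: step_rule_def)

lemma Reg_step_rule_le_VCal:
  assumes p: "\<forall>t<T. p t \<in> {0..1}"
    and ab: "0 \<le> a" "a < b" "b \<le> 1" and v: "v \<in> {a..b}"
    and gap: "\<forall>t<T. p t \<le> a \<or> b \<le> p t" "beta T x \<le> a \<or> b \<le> beta T x"
  shows "Reg (step_rule a v) T p x \<le> VCal T p x"
proof (rule continuous_le_on_closure[where f = "\<lambda>w. Reg (step_rule a w) T p x"])
  show "continuous_on (closure {a<..<b}) (\<lambda>w. Reg (step_rule a w) T p x)"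
    unfolding Reg_def step_rule_def by (intro continuous_intros)
  show "v \<in> closure {a<..<b}"
    using ab v by simp
next
  fix w assume w: "w \<in> {a<..<b}"
  have "vshaped w q y = step_rule a w q y" if "q \<le> a \<or> b \<le> q" for q y
    using that w by (auto simp: vshaped_eq_sgn step_rule_def sgn_if)
  then have "Reg (step_rule a w) T p x = Reg (vshaped w) T p x"
    by (intro Reg_cong) (use gap in auto)
  also have "\<dots> \<le> VCal T p x"
    using Reg_vshaped_le_VCal[OF p] w ab by simp
  finally show "Reg (step_rule a w) T p x \<le> VCal T p x" .
qed

section \<open>Proper rules as mixtures of step rules\<close>

definition score_slope :: "scoring_rule \<Rightarrow> real \<Rightarrow> real" where
  "score_slope l q = l q True - l q False"

lemma exp_score_eq_score_slope: "exp_score l p q = l p False + q * score_slope l p"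
  by (simp add: exp_score_def score_slope_def algebra_simps)

lemma abs_score_slope_le:
  assumes "l \<in> bounded_proper_rules" "q \<in> {0..1}"
  shows "\<bar>score_slope l q\<bar> \<le> 2"
proof -
  have "l q True \<in> {-1..1}" "l q False \<in> {-1..1}"
    using assms unfolding bounded_proper_rules_def by auto
  then show ?thesis
    unfolding score_slope_def by (auto simp: abs_le_iff)
qed

lemma proper_increment_bounds:
  assumes "proper l" "a \<in> {0..1}" "b \<in> {0..1}"
  shows "a * (score_slope l a - score_slope l b) \<le> l b False - l a False"
    and "l b False - l a False \<le> b * (score_slope l a - score_slope l b)"
proof -
  have "exp_score l a a \<le> exp_score l b a" "exp_score l b b \<le> exp_score l a b"
    using assms unfolding proper_def by auto
  then show "a * (score_slope l a - score_slope l b) \<le> l b False - l a False"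
    and "l b False - l a False \<le> b * (score_slope l a - score_slope l b)"
    by (simp_all add: exp_score_eq_score_slope algebra_simps)
qed

lemma proper_score_slope_antimono:
  assumes "proper l" "a \<in> {0..1}" "b \<in> {0..1}" "a < b"
  shows "score_slope l b \<le> score_slope l a"
proof -
  have "0 \<le> (b - a) * (score_slope l a - score_slope l b)"
    using proper_increment_bounds[OF assms(1-3)] by (simp add: algebra_simps)
  then show ?thesis
    using assms(4) by (simp add: zero_le_mult_iff)
qed

lemma proper_increment:
  assumes "proper l" "a \<in> {0..1}" "b \<in> {0..1}" "a < b"
  obtains v where "v \<in> {a..b}"
    "\<And>y. l b y - l a y = (score_slope l a - score_slope l b) * (v - of_outcome y)"
proof -
  define D where "D = score_slope l a - score_slope l b"
  define v where "v = (if D = 0 then a else (l b False - l a False) / D)"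
  have D: "0 \<le> D"
    using proper_score_slope_antimono[OF assms] by (simp add: D_def)
  have bounds: "a * D \<le> l b False - l a False" "l b False - l a False \<le> b * D"
    using proper_increment_bounds[OF assms(1-3)] by (simp_all add: D_def)
  have Dv: "D * v = l b False - l a False"
    \<comment> \<open>for \<open>D = 0\<close> the bounds force \<open>l b False = l a False\<close>, so \<open>v\<close> is arbitrary\<close>
    using bounds by (auto simp: v_def)
  have "v \<in> {a..b}"
    using D bounds assms(4) by (auto simp: v_def field_simps)
  moreover have "l b y - l a y = D * (v - of_outcome y)" for y
    using Dv by (cases y) (auto simp: D_def score_slope_def of_outcome_def algebra_simps)
  ultimately show ?thesis
    using that by (simp add: D_def)
qed

definition consecutive_in :: "real set \<Rightarrow> real \<Rightarrow> real \<Rightarrow> bool" where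
  "consecutive_in S a b \<longleftrightarrow> a \<in> S \<and> b \<in> S \<and> a < b \<and> (\<forall>q\<in>S. q \<le> a \<or> b \<le> q)"

lemma consecutive_in_insert_above:
  "consecutive_in A a b \<Longrightarrow> \<forall>q\<in>A. q < b0 \<Longrightarrow> consecutive_in (insert b0 A) a b"
  by (auto simp: consecutive_in_def)

lemma step_rule_gaps_insert_above:
  assumes "\<forall>j<n. 0 \<le> W j \<and> consecutive_in A (a j) (b j) \<and> v j \<in> {a j..b j}"
    and "finite A" "A \<noteq> {}" "\<forall>q\<in>A. q < b0" "0 \<le> w" "v0 \<in> {Max A..b0}"
  shows "\<forall>j<Suc n. 0 \<le> (W(n := w)) j
    \<and> consecutive_in (insert b0 A) ((a(n := Max A)) j) ((b(n := b0)) j)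
    \<and> (v(n := v0)) j \<in> {(a(n := Max A)) j..(b(n := b0)) j}"
proof -
  have "consecutive_in (insert b0 A) (Max A) b0"
    using assms(2-4) by (auto simp: consecutive_in_def)
  then show ?thesis
    using assms consecutive_in_insert_above by (auto simp: less_Suc_eq)
qed

(* The new step rule at the gap (m, b0) adds D/2 (y - v0) on A, which the new outcome term
   cancels, and -D/2 (y - v0) at b0, which together supply the increment D (v0 - y). *)
lemma step_rule_mixture_insert_above:
  assumes rep: "\<forall>q\<in>A. \<forall>y. l q y = c y + (\<Sum>j<n. W j * step_rule (a j) (v j) q y)"
    and below: "\<forall>j<n. a j < m" and m: "m \<in> A" "\<forall>q\<in>A. q \<le> m" "m < b0"
    and increment: "\<forall>y. l b0 y - l m y = D * (v0 - of_outcome y)"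
  shows "\<forall>q\<in>insert b0 A. \<forall>y. l q y = (c y - D / 2 * (of_outcome y - v0))
    + (\<Sum>j<Suc n. (W(n := D / 2)) j * step_rule ((a(n := m)) j) ((v(n := v0)) j) q y)"
proof (intro ballI allI)
  fix q y assume q: "q \<in> insert b0 A"
  have sum_Suc: "(\<Sum>j<Suc n. (W(n := D / 2)) j * step_rule ((a(n := m)) j) ((v(n := v0)) j) q y)
      = (\<Sum>j<n. W j * step_rule (a j) (v j) q y) + D / 2 * step_rule m v0 q y"
    by simp
  from q consider "q = b0" | "q \<in> A"
    by blast
  then show "l q y = (c y - D / 2 * (of_outcome y - v0))
    + (\<Sum>j<Suc n. (W(n := D / 2)) j * step_rule ((a(n := m)) j) ((v(n := v0)) j) q y)"
  proof cases
    case 1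
    have "step_rule (a j) (v j) b0 y = step_rule (a j) (v j) m y" if "j < n" for j
    proof -
      have "a j < m"
        using below that by simp
      then show ?thesis
        using m(3) by (simp add: step_rule_above)
    qed
    then have "l b0 y = c y + (\<Sum>j<n. W j * step_rule (a j) (v j) b0 y) + D * (v0 - of_outcome y)"
      using rep increment m(1) by (simp add: algebra_simps)
    then show ?thesis
      using 1 m(3) unfolding sum_Suc by (simp add: step_rule_above field_simps)
  next
    case 2
    then show ?thesis
      using rep m(2) unfolding sum_Suc by (simp add: step_rule_below)
  qed
qed

lemma proper_step_rule_decomposition:
  assumes "proper l" "finite S" "S \<noteq> {}" "S \<subseteq> {0..1}"
  shows "\<exists>(n::nat) c W a b v.
    (\<forall>j<n. 0 \<le> W j \<and> consecutive_in S (a j) (b j) \<and> v j \<in> {a j..b j})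
    \<and> (\<Sum>j<n. W j) = (score_slope l (Min S) - score_slope l (Max S)) / 2
    \<and> (\<forall>q\<in>S. \<forall>y. l q y = c y + (\<Sum>j<n. W j * step_rule (a j) (v j) q y))"
  using assms(2-4)
proof (induction S rule: finite_linorder_max_induct)
  case empty
  then show ?case by simp
next
  case (insert b0 A)
  show ?case
  proof (cases "A = {}")
    case True
    show ?thesis
      by (rule exI[of _ 0], rule exI[of _ "l b0"]) (simp add: True)
  next
    case False
    define m where "m = Max A"
    have m: "m \<in> A" "\<forall>q\<in>A. q \<le> m" "m < b0"
      using False insert.hyps by (auto simp: m_def)
    then have unit: "m \<in> {0..1}" "b0 \<in> {0..1}"
      using insert.prems by auto
    have "A \<subseteq> {0..1}"
      using insert.prems by simp
    then obtain n :: nat and c W a b v where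
      gaps: "\<forall>j<n. 0 \<le> W j \<and> consecutive_in A (a j) (b j) \<and> v j \<in> {a j..b j}"
      and total: "(\<Sum>j<n. W j) = (score_slope l (Min A) - score_slope l m) / 2"
      and rep: "\<forall>q\<in>A. \<forall>y. l q y = c y + (\<Sum>j<n. W j * step_rule (a j) (v j) q y)"
      using insert.IH[OF False] unfolding m_def[symmetric] by blast
    define D where "D = score_slope l m - score_slope l b0"
    obtain v0 where v0: "v0 \<in> {m..b0}" "\<forall>y. l b0 y - l m y = D * (v0 - of_outcome y)"
      using proper_increment[OF assms(1) unit m(3)] unfolding D_def by blast
    have D: "0 \<le> D"
      using proper_score_slope_antimono[OF assms(1) unit m(3)] by (simp add: D_def)
    have "\<forall>j<Suc n. 0 \<le> (W(n := D / 2)) j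
      \<and> consecutive_in (insert b0 A) ((a(n := m)) j) ((b(n := b0)) j)
      \<and> (v(n := v0)) j \<in> {(a(n := m)) j..(b(n := b0)) j}"
      using step_rule_gaps_insert_above[OF gaps insert.hyps(1) False insert.hyps(2)] D v0(1)
      by (simp add: m_def)
    moreover have "Min (insert b0 A) = Min A" "Max (insert b0 A) = b0"
      using Min_in[OF insert.hyps(1) False] insert.hyps False m by (auto simp: m_def)
    then have "(\<Sum>j<Suc n. (W(n := D / 2)) j)
        = (score_slope l (Min (insert b0 A)) - score_slope l (Max (insert b0 A))) / 2"
      using total by (simp add: D_def field_simps)
    moreover have "\<forall>j<n. a j < m"
      using gaps m(2) by (fastforce simp: consecutive_in_def)
    then have "\<forall>q\<in>insert b0 A. \<forall>y. l q y = (c y - D / 2 * (of_outcome y - v0))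
      + (\<Sum>j<Suc n. (W(n := D / 2)) j * step_rule ((a(n := m)) j) ((v(n := v0)) j) q y)"
      by (rule step_rule_mixture_insert_above[OF rep _ m(1-3) v0(2)])
    ultimately show ?thesis
      by (intro exI conjI) assumption+
  qed
qed

lemma Reg_le_twice_VCal:
  assumes p: "\<forall>t<T. p t \<in> {0..1}" and l: "l \<in> bounded_proper_rules"
  shows "Reg l T p x \<le> 2 * VCal T p x"
proof -
  define S where "S = insert (beta T x) (p ` {..<T})"
  have S: "finite S" "S \<noteq> {}" "S \<subseteq> {0..1}"
    using p beta_in_unit_interval by (auto simp: S_def)
  have "proper l"
    using l by (simp add: bounded_proper_rules_def)
  then obtain n :: nat and c W a b v where
    gaps: "\<forall>j<n. 0 \<le> W j \<and> consecutive_in S (a j) (b j) \<and> v j \<in> {a j..b j}"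
    and total: "(\<Sum>j<n. W j) = (score_slope l (Min S) - score_slope l (Max S)) / 2"
    and rep: "\<forall>q\<in>S. \<forall>y. l q y = c y + (\<Sum>j<n. W j * step_rule (a j) (v j) q y)"
    using proper_step_rule_decomposition[OF _ S] by blast
  have "Reg l T p x = Reg (\<lambda>q y. c y + (\<Sum>j<n. W j * step_rule (a j) (v j) q y)) T p x"
    by (rule Reg_cong) (use rep in \<open>auto simp: S_def\<close>)
  also have "\<dots> = (\<Sum>j<n. W j * Reg (step_rule (a j) (v j)) T p x)"
    by (simp add: Reg_add_outcome_term Reg_weighted_sum)
  also have "\<dots> \<le> (\<Sum>j<n. W j * VCal T p x)"
  proof (intro sum_mono mult_left_mono)
    fix j assume "j \<in> {..<n}"
    then have j: "0 \<le> W j" "a j \<in> S" "b j \<in> S" "a j < b j" "v j \<in> {a j..b j}"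
      "\<forall>q\<in>S. q \<le> a j \<or> b j \<le> q"
      using gaps by (auto simp: consecutive_in_def)
    then show "0 \<le> W j"
      by simp
    have "\<forall>t<T. p t \<le> a j \<or> b j \<le> p t" "beta T x \<le> a j \<or> b j \<le> beta T x"
      using j(6) by (auto simp: S_def)
    then show "Reg (step_rule (a j) (v j)) T p x \<le> VCal T p x"
      using j S(3) by (intro Reg_step_rule_le_VCal[OF p]) auto
  qed
  also have "\<dots> = (\<Sum>j<n. W j) * VCal T p x"
    by (simp add: sum_distrib_right)
  also have "\<dots> \<le> 2 * VCal T p x"
  proof (rule mult_right_mono[OF _ VCal_nonneg[OF p]])
    have "Min S \<in> {0..1}" "Max S \<in> {0..1}"
      using S Min_in Max_in by blast+
    then have "\<bar>score_slope l (Min S)\<bar> \<le> 2" "\<bar>score_slope l (Max S)\<bar> \<le> 2"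
      using abs_score_slope_le[OF l] by blast+
    then show "(\<Sum>j<n. W j) \<le> 2"
      unfolding total by (simp add: abs_le_iff)
  qed
  finally show ?thesis .
qed

theorem theorem4p2:
  fixes T :: nat and p :: "nat \<Rightarrow> real" and x :: "nat \<Rightarrow> bool"
  assumes "\<forall>t<T. p t \<in> {0..1}"
  shows "MaxAgentReg T p x / 2 \<le> VCal T p x \<and> VCal T p x \<le> MaxAgentReg T p x"
proof
  have "(\<lambda>_ _. 0) \<in> bounded_proper_rules"
    by (simp add: bounded_proper_rules_def proper_def exp_score_def)
  then have "MaxAgentReg T p x \<le> 2 * VCal T p x"
    unfolding MaxAgentReg_def by (blast intro: cSUP_least Reg_le_twice_VCal[OF assms])
  then show "MaxAgentReg T p x / 2 \<le> VCal T p x"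
    by simp
  show "VCal T p x \<le> MaxAgentReg T p x"
    using VCal_le_MaxAgentReg[OF assms] .
qed

end
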